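(* (a) A sphere with $6$ punctures has an ideal triangulation satisfying (T4). (b) A sphere with $5$ punctures has an ideal triangulation satisfying (T3$\tfrac12$), but no ideal triangulation satisfying (T4). (c) A sphere with $4$ punctures has an ideal triangulation satisfying (T3), but no ideal triangulation satisfying (T3$\tfrac12$).
   Context: Arcs incident to a puncture are counted with multiplicity (an arc with both endpoints at the puncture counts twice). (T3): at each puncture at least three arcs of $T$ are incident. (T3$\tfrac12$): $T$ has (T3) and every arc of $T$ has an endpoint with at least four incident arcs. (T4): at each puncture at least four arcs of $T$ are incident. *)

theory Defs
  imports "HOL-Combinatorics.Permutations"
begin

(* Ideal triangulations of a punctured oriented sphere, encoded as
   combinatorial maps (darts = half-arcs = ends of arcs at punctures).
   alpha : involution pairing the two ends of each arc,
   sigma : rotation of arc-ends around each puncture,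
   sigma o alpha : walks around the (ideal) triangles. *)

definition orb :: "('a \<Rightarrow> 'a) \<Rightarrow> 'a \<Rightarrow> 'a set" where
  "orb f d = {(f ^^ k) d | k. True}"

definition punctures :: "'a set \<Rightarrow> ('a \<Rightarrow> 'a) \<Rightarrow> 'a set set" where
  "punctures D sigma = orb sigma ` D"

definition arcs :: "'a set \<Rightarrow> ('a \<Rightarrow> 'a) \<Rightarrow> 'a set set" where
  "arcs D alpha = orb alpha ` D"

definition triangles :: "'a set \<Rightarrow> ('a \<Rightarrow> 'a) \<Rightarrow> ('a \<Rightarrow> 'a) \<Rightarrow> 'a set set" where
  "triangles D alpha sigma = orb (sigma \<circ> alpha) ` D"

definition ideal_triangulation_sphere :: "'a set \<Rightarrow> ('a \<Rightarrow> 'a) \<Rightarrow> ('a \<Rightarrow> 'a) \<Rightarrow> bool" where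
  "ideal_triangulation_sphere D alpha sigma \<longleftrightarrow>
     finite D \<and> D \<noteq> {} \<and> alpha permutes D \<and> sigma permutes D \<and>
     (\<forall>d\<in>D. alpha (alpha d) = d \<and> alpha d \<noteq> d) \<and>
     (\<forall>d\<in>D. (sigma \<circ> alpha) d \<noteq> d \<and> ((sigma \<circ> alpha) ^^ 3) d = d) \<and>
     (\<forall>d\<in>D. \<forall>e\<in>D. (d, e) \<in> ({(x, alpha x) | x. x \<in> D} \<union> {(x, sigma x) | x. x \<in> D})\<^sup>*) \<and>
     int (card (punctures D sigma)) - int (card (arcs D alpha))
       + int (card (triangles D alpha sigma)) = 2"

(* number of arcs incident to the puncture containing arc-end d, with multiplicity *)
definition valence :: "('a \<Rightarrow> 'a) \<Rightarrow> 'a \<Rightarrow> nat" where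
  "valence sigma d = card (orb sigma d)"

definition T3 :: "'a set \<Rightarrow> ('a \<Rightarrow> 'a) \<Rightarrow> ('a \<Rightarrow> 'a) \<Rightarrow> bool" where
  "T3 D alpha sigma \<longleftrightarrow> (\<forall>d\<in>D. valence sigma d \<ge> 3)"

definition T3half :: "'a set \<Rightarrow> ('a \<Rightarrow> 'a) \<Rightarrow> ('a \<Rightarrow> 'a) \<Rightarrow> bool" where
  "T3half D alpha sigma \<longleftrightarrow> T3 D alpha sigma \<and>
     (\<forall>d\<in>D. valence sigma d \<ge> 4 \<or> valence sigma (alpha d) \<ge> 4)"

definition T4 :: "'a set \<Rightarrow> ('a \<Rightarrow> 'a) \<Rightarrow> ('a \<Rightarrow> 'a) \<Rightarrow> bool" where
  "T4 D alpha sigma \<longleftrightarrow> (\<forall>d\<in>D. valence sigma d \<ge> 4)"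

end

theory Submission
  imports Defs "HOL-Combinatorics.Orbits" Complex_Main
begin

(* Every arc has two ends and every triangle three, so |D| = 2E = 3F and Euler's formula
   V - E + F = 2 becomes |D| + 12 = 6V. As |D| is the sum of the valences of the punctures,
   (T4) gives 4V <= 6V - 12, i.e. V >= 6, while (T3 1/2), which forces valence at least 4 at
   some puncture and at least 3 at all others, gives 3V + 1 <= 6V - 12, i.e. V >= 5.
   The tetrahedron, the triangular bipyramid and the octahedron realise the remaining cases;
   they are given as explicit combinatorial maps and checked by computation. *)

lemma orb_eq_orbit: "permutation f \<Longrightarrow> orb f = orbit f"
  by (simp add: fun_eq_iff orb_def orbit_altdef_permutation)

lemma orb_eq_funpow_image:
  assumes "(f ^^ n) d = d" "0 < n"
  shows "orb f d = (\<lambda>k. (f ^^ k) d) ` {..<n}"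
proof
  show "orb f d \<subseteq> (\<lambda>k. (f ^^ k) d) ` {..<n}"
  proof
    fix x assume "x \<in> orb f d"
    then obtain k where "x = (f ^^ k) d" by (auto simp: orb_def)
    then have "x = (f ^^ (k mod n)) d" using funpow_mod_eq[OF assms(1)] by simp
    then show "x \<in> (\<lambda>k. (f ^^ k) d) ` {..<n}" using assms(2) by auto
  qed
qed (auto simp: orb_def)

lemma card_orb_eqI:
  assumes "(f ^^ n) d = d" "0 < n" "distinct (map (\<lambda>k. (f ^^ k) d) [0..<n])"
  shows "card (orb f d) = n"
  using orb_eq_funpow_image[OF assms(1,2)] distinct_card[OF assms(3)]
  by (simp add: lessThan_atLeast0)

lemma card_orb_involution:
  assumes "f (f d) = d" "f d \<noteq> d"
  shows "card (orb f d) = 2"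
  by (rule card_orb_eqI) (use assms in \<open>simp_all add: numeral_2_eq_2\<close>)

lemma card_orb_order_3:
  assumes "(f ^^ 3) d = d" "f d \<noteq> d"
  shows "card (orb f d) = 3"
proof (rule card_orb_eqI)
  have "f (f (f d)) = d" using assms(1) by (simp add: numeral_3_eq_3)
  then show "distinct (map (\<lambda>k. (f ^^ k) d) [0..<3])"
    using assms(2) by (auto simp: numeral_3_eq_3)
qed (use assms in simp_all)

lemma orbit_eq_if_mem:
  assumes "f permutes D" "finite D" "e \<in> orbit f d"
  shows "orbit f e = orbit f d"
  using assms by (metis cyclic_on_orbit orbit_cyclic_eq3)

lemma sum_over_orbits:
  assumes "f permutes D" "finite D"
  shows "sum g D = (\<Sum>P\<in>orbit f ` D. sum g P)"
proof -
  have perm: "permutation f" using assms permutes_imp_permutation by blast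
  have "\<Union> (orbit f ` D) = D"
    using permutes_orbit_subset[OF assms(1)] permutation_self_in_orbit[OF perm] by blast
  moreover have "sum g (\<Union> (orbit f ` D)) = (\<Sum>P\<in>orbit f ` D. sum g P)"
  proof (rule sum.Union_disjoint[unfolded comp_def])
    show "\<forall>P\<in>orbit f ` D. finite P"
      using permutes_orbit_subset[OF assms(1)] finite_subset[OF _ assms(2)] by blast
    show "\<forall>P\<in>orbit f ` D. \<forall>Q\<in>orbit f ` D. P \<noteq> Q \<longrightarrow> P \<inter> Q = {}"
      using orbit_eq_if_mem[OF assms] by blast
  qed
  ultimately show ?thesis by simp
qed

lemma card_eq_sum_card_orbits:
  assumes "f permutes D" "finite D"
  shows "card D = (\<Sum>P\<in>orbit f ` D. card P)"
  using sum_over_orbits[OF assms, of "\<lambda>_. 1::nat"] by simp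

lemma card_eq_mult_card_orbits:
  assumes "f permutes D" "finite D" "\<forall>d\<in>D. card (orbit f d) = k"
  shows "card D = k * card (orbit f ` D)"
proof -
  have "(\<Sum>P\<in>orbit f ` D. card P) = (\<Sum>P\<in>orbit f ` D. k)"
    by (rule sum.cong) (use assms(3) in auto)
  then show ?thesis using card_eq_sum_card_orbits[OF assms(1,2)] by simp
qed

lemma card_orbits_eq_sum_inverse:
  assumes "f permutes D" "finite D"
  shows "real (card (orbit f ` D)) = (\<Sum>d\<in>D. 1 / real (card (orbit f d)))"
proof -
  have "(\<Sum>d\<in>P. 1 / real (card (orbit f d))) = 1" if P: "P \<in> orbit f ` D" for P
  proof -
    obtain e where e: "e \<in> D" "P = orbit f e" using P by blast
    then have "finite P"
      using permutes_orbit_subset[OF assms(1) e(1)] finite_subset[OF _ assms(2)] by simp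
    moreover have "P \<noteq> {}" using e(2) orbit_nonempty by simp
    moreover have "\<forall>d\<in>P. orbit f d = P" using orbit_eq_if_mem[OF assms] e(2) by blast
    ultimately show ?thesis by simp
  qed
  then show ?thesis by (simp add: sum_over_orbits[OF assms, of "\<lambda>d. 1 / real (card (orbit f d))"])
qed

lemma sum_orbits_le_card:
  assumes "f permutes D" "finite D" "\<forall>d\<in>D. b (orbit f d) \<le> card (orbit f d)"
  shows "(\<Sum>P\<in>orbit f ` D. b P) \<le> card D"
  unfolding card_eq_sum_card_orbits[OF assms(1,2)] using assms(3) by (auto intro: sum_mono)

lemma rtrancl_funpow:
  assumes "f permutes D" "\<forall>x\<in>D. (x, f x) \<in> R" "x \<in> D"
  shows "(x, (f ^^ n) x) \<in> R\<^sup>*"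
proof (induction n)
  case (Suc n)
  have "(f ^^ n) x \<in> D" using permutes_in_funpow_image[OF assms(1,3)] .
  with Suc assms(2) show ?case by (auto intro: rtrancl_into_rtrancl)
qed simp

lemma rtrancl_permutation_step_back:
  assumes "f permutes D" "finite D" "\<forall>x\<in>D. (x, f x) \<in> R" "x \<in> D"
  shows "(f x, x) \<in> R\<^sup>*"
proof -
  have perm: "permutation f" using assms(1,2) permutes_imp_permutation by blast
  then have "x \<in> orbit f (f x)"
    by (simp add: permutation_orbit_step permutation_self_in_orbit)
  then obtain n where "x = (f ^^ n) (f x)" by (auto simp: orbit_altdef)
  moreover have "f x \<in> D" using permutes_in_image[OF assms(1)] assms(4) by simp
  ultimately show ?thesis using rtrancl_funpow[OF assms(1,3)] by metis
qed

lemma rtrancl_converse_if_steps_reversible: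
  assumes "\<And>x y. (x, y) \<in> R \<Longrightarrow> (y, x) \<in> R\<^sup>*" "(x, y) \<in> R\<^sup>*"
  shows "(y, x) \<in> R\<^sup>*"
  using assms(2) by induction (auto intro: rtrancl_trans assms(1))

definition expand_darts :: "('a \<Rightarrow> 'a) \<Rightarrow> ('a \<Rightarrow> 'a) \<Rightarrow> 'a list \<Rightarrow> 'a list" where
  "expand_darts alpha sigma ds = remdups (ds @ map alpha ds @ map sigma ds)"

lemma connected_if_covered_by_expand_darts:
  fixes alpha sigma :: "'a \<Rightarrow> 'a" and D :: "'a set" and R :: "('a \<times> 'a) set"
  defines "R \<equiv> {(x, alpha x) | x. x \<in> D} \<union> {(x, sigma x) | x. x \<in> D}"
  assumes "alpha permutes D" "sigma permutes D" "finite D" "c \<in> D"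
    and "D \<subseteq> set ((expand_darts alpha sigma ^^ n) [c])"
  shows "\<forall>d\<in>D. \<forall>e\<in>D. (d, e) \<in> R\<^sup>*"
proof -
  have reach: "\<forall>d\<in>set ((expand_darts alpha sigma ^^ k) [c]). d \<in> D \<and> (c, d) \<in> R\<^sup>*" for k
  proof (induction k)
    case (Suc k)
    then show ?case
      using permutes_in_image[OF assms(2)] permutes_in_image[OF assms(3)]
      by (auto simp: expand_darts_def R_def intro: rtrancl_into_rtrancl)
  qed (simp add: \<open>c \<in> D\<close>)
  have reversible: "(y, x) \<in> R\<^sup>*" if "(x, y) \<in> R" for x y
    using that rtrancl_permutation_step_back[OF assms(2,4)] rtrancl_permutation_step_back[OF assms(3,4)]
    by (auto simp: R_def)
  have from_c: "(c, d) \<in> R\<^sup>*" if "d \<in> D" for d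
    using reach assms(6) that by blast
  show ?thesis
  proof (intro ballI)
    fix d e assume "d \<in> D" "e \<in> D"
    have "(d, c) \<in> R\<^sup>*"
      using reversible from_c[OF \<open>d \<in> D\<close>] by (rule rtrancl_converse_if_steps_reversible)
    moreover have "(c, e) \<in> R\<^sup>*" by (rule from_c) fact
    ultimately show "(d, e) \<in> R\<^sup>*" by (rule rtrancl_trans)
  qed
qed

lemma ideal_triangulation_sphereD:
  assumes "ideal_triangulation_sphere D alpha sigma"
  shows "finite D" "D \<noteq> {}" "alpha permutes D" "sigma permutes D"
    "\<forall>d\<in>D. alpha (alpha d) = d \<and> alpha d \<noteq> d"
    "\<forall>d\<in>D. (sigma \<circ> alpha) d \<noteq> d \<and> ((sigma \<circ> alpha) ^^ 3) d = d"
    "int (card (punctures D sigma)) - int (card (arcs D alpha)) + int (card (triangles D alpha sigma)) = 2"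
  using assms unfolding ideal_triangulation_sphere_def by blast+

lemma punctures_eq_orbits:
  "sigma permutes D \<Longrightarrow> finite D \<Longrightarrow> punctures D sigma = orbit sigma ` D"
  by (simp add: punctures_def orb_eq_orbit permutes_imp_permutation)

lemma valence_eq_card_orbit:
  "sigma permutes D \<Longrightarrow> finite D \<Longrightarrow> valence sigma d = card (orbit sigma d)"
  by (simp add: valence_def orb_eq_orbit permutes_imp_permutation)

lemma card_darts_eq_twice_arcs:
  assumes "alpha permutes D" "finite D" "\<forall>d\<in>D. alpha (alpha d) = d \<and> alpha d \<noteq> d"
  shows "card D = 2 * card (arcs D alpha)"
proof -
  have perm: "permutation alpha" using assms(1,2) permutes_imp_permutation by blast
  have "\<forall>d\<in>D. card (orbit alpha d) = 2"
    using card_orb_involution assms(3) by (metis orb_eq_orbit[OF perm])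
  then show ?thesis
    unfolding arcs_def orb_eq_orbit[OF perm] by (rule card_eq_mult_card_orbits[OF assms(1,2)])
qed

lemma card_darts_eq_thrice_triangles:
  assumes "alpha permutes D" "sigma permutes D" "finite D"
    "\<forall>d\<in>D. (sigma \<circ> alpha) d \<noteq> d \<and> ((sigma \<circ> alpha) ^^ 3) d = d"
  shows "card D = 3 * card (triangles D alpha sigma)"
proof -
  have phi: "sigma \<circ> alpha permutes D" using assms(1,2) by (rule permutes_compose)
  have perm: "permutation (sigma \<circ> alpha)" using phi assms(3) permutes_imp_permutation by blast
  have "\<forall>d\<in>D. card (orbit (sigma \<circ> alpha) d) = 3"
    using card_orb_order_3 assms(4) by (metis orb_eq_orbit[OF perm])
  then show ?thesis
    unfolding triangles_def orb_eq_orbit[OF perm] by (rule card_eq_mult_card_orbits[OF phi assms(3)])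
qed

lemma valence_eqI:
  assumes "(sigma ^^ n) d = d" "0 < n" "distinct (map (\<lambda>k. (sigma ^^ k) d) [0..<n])"
  shows "valence sigma d = n"
  using card_orb_eqI[OF assms] by (simp add: valence_def)

lemma card_punctures_eq_sum_inverse_valence:
  assumes "sigma permutes D" "finite D"
  shows "real (card (punctures D sigma)) = (\<Sum>d\<in>D. 1 / real (valence sigma d))"
  using card_orbits_eq_sum_inverse[OF assms]
  by (simp add: punctures_eq_orbits[OF assms] valence_eq_card_orbit[OF assms])

lemma card_darts_Euler:
  assumes "ideal_triangulation_sphere D alpha sigma"
  shows "card D + 12 = 6 * card (punctures D sigma)"
proof -
  note T = ideal_triangulation_sphereD[OF assms]
  have "card D = 2 * card (arcs D alpha)" using card_darts_eq_twice_arcs[OF T(3,1,5)] .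
  moreover have "card D = 3 * card (triangles D alpha sigma)"
    using card_darts_eq_thrice_triangles[OF T(3,4,1,6)] .
  ultimately show ?thesis using T(7) by linarith
qed

lemma ideal_triangulation_sphereI:
  assumes "finite D" "c \<in> D" "alpha permutes D" "sigma permutes D"
    "\<forall>d\<in>D. alpha (alpha d) = d \<and> alpha d \<noteq> d"
    "\<forall>d\<in>D. (sigma \<circ> alpha) d \<noteq> d \<and> ((sigma \<circ> alpha) ^^ 3) d = d"
    "D \<subseteq> set ((expand_darts alpha sigma ^^ n) [c])"
    "card D + 12 = 6 * card (punctures D sigma)"
  shows "ideal_triangulation_sphere D alpha sigma"
proof -
  have "card D = 2 * card (arcs D alpha)" using card_darts_eq_twice_arcs[OF assms(3,1,5)] .
  moreover have "card D = 3 * card (triangles D alpha sigma)"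
    using card_darts_eq_thrice_triangles[OF assms(3,4,1,6)] .
  ultimately have "int (card (punctures D sigma)) - int (card (arcs D alpha))
      + int (card (triangles D alpha sigma)) = 2"
    using assms(8) by linarith
  moreover have "\<forall>d\<in>D. \<forall>e\<in>D. (d, e) \<in> ({(x, alpha x) | x. x \<in> D} \<union> {(x, sigma x) | x. x \<in> D})\<^sup>*"
    using connected_if_covered_by_expand_darts[OF assms(3,4,1,2,7)] .
  ultimately show ?thesis unfolding ideal_triangulation_sphere_def using assms(1-6) by blast
qed

lemma card_punctures_ge_6_if_T4:
  assumes "ideal_triangulation_sphere D alpha sigma" "T4 D alpha sigma"
  shows "6 \<le> card (punctures D sigma)"
proof -
  note T = ideal_triangulation_sphereD[OF assms(1)]
  have "(\<Sum>P\<in>orbit sigma ` D. 4) \<le> card D"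
    by (rule sum_orbits_le_card[OF T(4,1)])
      (use assms(2) in \<open>simp add: T4_def valence_eq_card_orbit[OF T(4,1)]\<close>)
  then have "4 * card (punctures D sigma) \<le> card D"
    by (simp add: punctures_eq_orbits[OF T(4,1)])
  then show ?thesis using card_darts_Euler[OF assms(1)] by linarith
qed

lemma card_punctures_ge_5_if_T3half:
  assumes "ideal_triangulation_sphere D alpha sigma" "T3half D alpha sigma"
  shows "5 \<le> card (punctures D sigma)"
proof -
  note T = ideal_triangulation_sphereD[OF assms(1)]
  obtain d where "d \<in> D" using T(2) by blast
  then obtain e where e: "e \<in> D" "4 \<le> valence sigma e"
    using assms(2) permutes_in_image[OF T(3)] unfolding T3half_def by blast
  let ?b = "\<lambda>P. if P = orbit sigma e then 4 else 3 :: nat"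
  have "(\<Sum>P\<in>orbit sigma ` D. ?b P) \<le> card D"
    by (rule sum_orbits_le_card[OF T(4,1)])
      (use assms(2) e(2) in \<open>simp add: T3half_def T3_def valence_eq_card_orbit[OF T(4,1)]\<close>)
  moreover have "(\<Sum>P\<in>orbit sigma ` D. ?b P) = 3 * card (punctures D sigma) + 1"
  proof -
    have "orbit sigma e \<in> orbit sigma ` D" "finite (orbit sigma ` D)" using e(1) T(1) by simp_all
    moreover from this have "0 < card (orbit sigma ` D)" using card_gt_0_iff by blast
    ultimately show ?thesis
      by (simp add: punctures_eq_orbits[OF T(4,1)] sum.If_cases Diff_eq[symmetric]
          card_Diff_singleton diff_mult_distrib)
  qed
  ultimately show ?thesis using card_darts_Euler[OF assms(1)] by linarith
qed

definition perm_of_list :: "nat list \<Rightarrow> nat \<Rightarrow> nat" where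
  "perm_of_list xs x = (if x < length xs then xs ! x else x)"

lemma perm_of_list_permutes:
  assumes "length xs = n" "distinct xs" "set xs \<subseteq> {..<n}"
  shows "perm_of_list xs permutes {..<n}"
proof (rule bij_imp_permutes)
  have "set xs = {..<n}"
    using card_subset_eq[OF finite_lessThan assms(3)] distinct_card[OF assms(2)] assms(1) by simp
  then have "bij_betw ((!) xs) {..<n} {..<n}" using bij_betw_nth[OF assms(2)] assms(1) by simp
  then show "bij_betw (perm_of_list xs) {..<n} {..<n}"
    by (rule bij_betw_cong[THEN iffD1, rotated]) (simp add: perm_of_list_def assms(1))
  show "perm_of_list xs x = x" if "x \<notin> {..<n}" for x
    using that assms(1) by (simp add: perm_of_list_def)
qed

(* A certificate for a concrete map on the darts {..<n}, with v the claimed valences: every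
   hypothesis is a closed computation, and the last four are discharged by evaluation. *)
lemma ideal_triangulation_sphere_of_lists:
  fixes as ss :: "nat list" and v :: "nat \<Rightarrow> nat"
  defines "alpha \<equiv> perm_of_list as" and "sigma \<equiv> perm_of_list ss"
  assumes "length as = n" "length ss = n" "0 < n"
    and "distinct as" "set as \<subseteq> {..<n}" "distinct ss" "set ss \<subseteq> {..<n}"
    and "(\<Sum>d<n. 1 / real (v d)) = real V" "n + 12 = 6 * V"
    and "\<forall>d\<in>{..<n}. alpha (alpha d) = d \<and> alpha d \<noteq> d"
    and "\<forall>d\<in>{..<n}. (sigma \<circ> alpha) d \<noteq> d \<and> ((sigma \<circ> alpha) ^^ 3) d = d"
    and "{..<n} \<subseteq> set ((expand_darts alpha sigma ^^ k) [0])"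
    and "\<forall>d\<in>{..<n}. 0 < v d \<and> (sigma ^^ v d) d = d \<and> distinct (map (\<lambda>i. (sigma ^^ i) d) [0..<v d])"
  shows "ideal_triangulation_sphere {..<n} alpha sigma \<and> card (punctures {..<n} sigma) = V
    \<and> (\<forall>d\<in>{..<n}. valence sigma d = v d)"
proof -
  have alpha: "alpha permutes {..<n}" unfolding alpha_def by (rule perm_of_list_permutes) fact+
  have sigma: "sigma permutes {..<n}" unfolding sigma_def by (rule perm_of_list_permutes) fact+
  have valence: "\<forall>d\<in>{..<n}. valence sigma d = v d"
  proof
    fix d assume "d \<in> {..<n}"
    then have "(sigma ^^ v d) d = d" "0 < v d" "distinct (map (\<lambda>i. (sigma ^^ i) d) [0..<v d])"
      using assms(15) by auto
    then show "valence sigma d = v d" by (rule valence_eqI)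
  qed
  then have punctures: "card (punctures {..<n} sigma) = V"
    using card_punctures_eq_sum_inverse_valence[OF sigma] assms(10) by simp
  have "ideal_triangulation_sphere {..<n} alpha sigma"
    by (rule ideal_triangulation_sphereI[OF _ _ alpha sigma assms(12-14)])
      (use assms(5,11) punctures in simp_all)
  with punctures valence show ?thesis by blast
qed

definition tetrahedron_alpha :: "nat \<Rightarrow> nat" where
  "tetrahedron_alpha = perm_of_list [8, 11, 3, 2, 10, 6, 5, 9, 0, 7, 4, 1]"

definition tetrahedron_sigma :: "nat \<Rightarrow> nat" where
  "tetrahedron_sigma = perm_of_list [6, 9, 4, 0, 11, 7, 3, 10, 1, 8, 5, 2]"

lemma tetrahedron:
  "ideal_triangulation_sphere {..<12} tetrahedron_alpha tetrahedron_sigma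
    \<and> card (punctures {..<12} tetrahedron_sigma) = 4 \<and> T3 {..<12} tetrahedron_alpha tetrahedron_sigma"
proof -
  have "ideal_triangulation_sphere {..<12} tetrahedron_alpha tetrahedron_sigma
    \<and> card (punctures {..<12} tetrahedron_sigma) = 4
    \<and> (\<forall>d\<in>{..<12}. valence tetrahedron_sigma d = 3)"
    unfolding tetrahedron_alpha_def tetrahedron_sigma_def
    by (rule ideal_triangulation_sphere_of_lists[where k = 6])
      ((simp_all add: lessThan_atLeast0 atLeastLessThan_upt upt_rec)[9], code_simp+)
  then show ?thesis by (simp add: T3_def)
qed

definition bipyramid_alpha :: "nat \<Rightarrow> nat" where
  "bipyramid_alpha = perm_of_list [8, 10, 3, 2, 13, 6, 5, 16, 0, 14, 1, 15, 17, 4, 9, 11, 7, 12]"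

definition bipyramid_sigma :: "nat \<Rightarrow> nat" where
  "bipyramid_sigma = perm_of_list [6, 11, 4, 0, 14, 7, 3, 17, 1, 12, 2, 16, 15, 5, 10, 9, 8, 13]"

(* Darts d with d mod 3 = 0 are the ends at the two apexes. *)
definition bipyramid_valence :: "nat \<Rightarrow> nat" where
  "bipyramid_valence d = (if d mod 3 = 0 then 3 else 4)"

lemma bipyramid:
  "ideal_triangulation_sphere {..<18} bipyramid_alpha bipyramid_sigma
    \<and> card (punctures {..<18} bipyramid_sigma) = 5 \<and> T3half {..<18} bipyramid_alpha bipyramid_sigma"
proof -
  have "ideal_triangulation_sphere {..<18} bipyramid_alpha bipyramid_sigma
    \<and> card (punctures {..<18} bipyramid_sigma) = 5
    \<and> (\<forall>d\<in>{..<18}. valence bipyramid_sigma d = bipyramid_valence d)"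
    unfolding bipyramid_alpha_def bipyramid_sigma_def
    by (rule ideal_triangulation_sphere_of_lists[where k = 6])
      ((simp_all add: bipyramid_valence_def lessThan_atLeast0 atLeastLessThan_upt upt_rec)[9],
        code_simp+)
  moreover have "\<forall>d\<in>{..<18}. bipyramid_alpha d < 18 \<and> 3 \<le> bipyramid_valence d \<and>
      (4 \<le> bipyramid_valence d \<or> 4 \<le> bipyramid_valence (bipyramid_alpha d))"
    by code_simp
  ultimately show ?thesis by (auto simp: T3half_def T3_def)
qed

definition octahedron_alpha :: "nat \<Rightarrow> nat" where
  "octahedron_alpha = perm_of_list
    [11, 13, 3, 2, 16, 6, 5, 19, 9, 8, 22, 0, 17, 1, 21, 20, 4, 12, 23, 7, 15, 14, 10, 18]"

definition octahedron_sigma :: "nat \<Rightarrow> nat" where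
  "octahedron_sigma = perm_of_list
    [9, 14, 4, 0, 17, 7, 3, 20, 10, 6, 23, 1, 15, 2, 22, 18, 5, 13, 21, 8, 16, 12, 11, 19]"

lemma octahedron:
  "ideal_triangulation_sphere {..<24} octahedron_alpha octahedron_sigma
    \<and> card (punctures {..<24} octahedron_sigma) = 6 \<and> T4 {..<24} octahedron_alpha octahedron_sigma"
proof -
  have "ideal_triangulation_sphere {..<24} octahedron_alpha octahedron_sigma
    \<and> card (punctures {..<24} octahedron_sigma) = 6
    \<and> (\<forall>d\<in>{..<24}. valence octahedron_sigma d = 4)"
    unfolding octahedron_alpha_def octahedron_sigma_def
    by (rule ideal_triangulation_sphere_of_lists[where k = 6])
      ((simp_all add: lessThan_atLeast0 atLeastLessThan_upt upt_rec)[9], code_simp+)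
  then show ?thesis by (simp add: T4_def)
qed

theorem lemma5p4:
  shows "(\<exists>(D::nat set) alpha sigma. ideal_triangulation_sphere D alpha sigma \<and>
            card (punctures D sigma) = 6 \<and> T4 D alpha sigma)
       \<and> (\<exists>(D::nat set) alpha sigma. ideal_triangulation_sphere D alpha sigma \<and>
            card (punctures D sigma) = 5 \<and> T3half D alpha sigma)
       \<and> (\<forall>(D::'a set) alpha sigma. ideal_triangulation_sphere D alpha sigma \<and>
            card (punctures D sigma) = 5 \<longrightarrow> \<not> T4 D alpha sigma)
       \<and> (\<exists>(D::nat set) alpha sigma. ideal_triangulation_sphere D alpha sigma \<and>
            card (punctures D sigma) = 4 \<and> T3 D alpha sigma)
       \<and> (\<forall>(D::'a set) alpha sigma. ideal_triangulation_sphere D alpha sigma \<and>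
            card (punctures D sigma) = 4 \<longrightarrow> \<not> T3half D alpha sigma)"
proof -
  have no_T4: "\<not> T4 D alpha sigma"
    if "ideal_triangulation_sphere D alpha sigma" "card (punctures D sigma) = 5" for D :: "'a set" and alpha sigma
    using card_punctures_ge_6_if_T4[OF that(1)] that(2) by auto
  have no_T3half: "\<not> T3half D alpha sigma"
    if "ideal_triangulation_sphere D alpha sigma" "card (punctures D sigma) = 4" for D :: "'a set" and alpha sigma
    using card_punctures_ge_5_if_T3half[OF that(1)] that(2) by auto
  show ?thesis
    using octahedron bipyramid tetrahedron no_T4 no_T3half by blast
qed

end
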